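(* Assume (H1)–(H9) with (H7) in the form (H7-WFL), all as described in the context. Then there exists an event $\Omega_1\subseteq\Omega$ of full probability such that for all $\omega\in\Omega_1$, $$\tilde A(\omega)=\overline A:=\max(\mu^\star_L,\mu^\star_R).$$
   Context: $(\Omega,\mathbf F,P)$ probability space; $H:\mathbb R\times\mathbb R\times\Omega\to\mathbb R$ measurable; for Borel $V$, $\mathbf F(V)$ is the $\sigma$-algebra generated by $\omega\mapsto H(p,y,\omega)$, $y\in V$, $p\in\mathbb R$. $(\tau_z)_{z\in\mathbb R}$ is an ergodic group of measure-preserving maps of $\Omega$ ($\tau_{x+z}=\tau_x\circ\tau_z$; invariant events have probability 0 or 1). (H1) $H$ Lipschitz in $p$ uniformly in $(y,\omega)$. (H2) $-c_0|p+\gamma|\le H\le C_0|p+\gamma|$ for some $c_0,C_0,\gamma>0$. (H3) $\lim_{|p|\to\infty}\inf_{(y,\omega)}H=+\infty$. (H4) $|H(p,y,\omega)-H(p,x,\omega)|\le w(|x-y|(1+|p|))$ for a modulus $w$. (H5) $H$ convex in $p$. (H6) $H(p,y,\omega)\ge H(0,y,\omega)$. (H7-WFL) $H(p,y,\omega)=\phi(y)H_L(p,y,\omega)+(1-\phi(y))H_R(p,y,\omega)$ with $\phi\in C^\infty$ non-increasing, $\phi=1$ on $(-\infty,-1]$, $\phi=0$ on $[1,\infty)$. (H8) $H_\alpha(p,y+z,\omega)=H_\alpha(p,y,\tau_z\omega)$ for $\alpha\in\{L,R\}$. (H9) $\mathbf F(U),\mathbf F(V)$ independent whenever $d(U,V)\ge1$.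 Definitions: $\tilde A(\omega)=\inf\{\mu:\ \exists v$ globally Lipschitz with $H(Dv,y,\omega)\le\mu$ in $\mathbb R\}$; $\mu^\star_\alpha$ is the almost surely constant value of $\inf\{\mu:\ \exists v$ globally Lipschitz with $H_\alpha(Dv,y,\omega)\le\mu$ in $\mathbb R\}$ (inequalities in the viscosity sense). *)

theory Defs
  imports "HOL-Probability.Probability"
begin

definition visc_subsol :: "(real \<Rightarrow> real \<Rightarrow> real) \<Rightarrow> (real \<Rightarrow> real) \<Rightarrow> real \<Rightarrow> bool" where
  "visc_subsol G v mu \<longleftrightarrow> continuous_on UNIV v \<and>
     (\<forall>phi phi' y. (\<forall>x. (phi has_real_derivative phi' x) (at x)) \<and> continuous_on UNIV phi' \<and>
        (\<exists>e>0. \<forall>x. \<bar>x - y\<bar> < e \<longrightarrow> v x - phi x \<le> v y - phi y)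
        \<longrightarrow> G (phi' y) y \<le> mu)"

definition crit_value :: "(real \<Rightarrow> real \<Rightarrow> real) \<Rightarrow> real" where
  "crit_value G = Inf {mu. \<exists>v. (\<exists>L. lipschitz_on L UNIV v) \<and> visc_subsol G v mu}"

definition modulus :: "(real \<Rightarrow> real) \<Rightarrow> bool" where
  "modulus w \<longleftrightarrow> w 0 = 0 \<and> (\<forall>r\<ge>0. w r \<ge> 0) \<and> mono_on {0..} w \<and> (w \<longlongrightarrow> 0) (at_right 0)"

definition smooth_fun :: "(real \<Rightarrow> real) \<Rightarrow> bool" where
  "smooth_fun f \<longleftrightarrow> (\<forall>n x. ((deriv ^^ n) f) differentiable (at x))"

definition gen_sigma :: "'w measure \<Rightarrow> (real \<Rightarrow> real \<Rightarrow> 'w \<Rightarrow> real) \<Rightarrow> real set \<Rightarrow> 'w set set" where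
  "gen_sigma M H V = sigma_sets (space M)
     {(\<lambda>\<omega>. H p y \<omega>) -` B \<inter> space M | p y B. y \<in> V \<and> B \<in> sets borel}"

end

theory Submission
  imports Defs
begin

text \<open>Since \<open>H(p, y) \<ge> H(0, y)\<close>, a Lipschitz viscosity subsolution of \<open>H(Dv, y) \<le> \<mu>\<close> exists
  exactly when \<open>\<mu> \<ge> sup\<^sub>y H(0, y)\<close>: a constant is one, and conversely touching a subsolution from
  above by a steep parabola centred at \<open>y\<^sub>0\<close> gives \<open>H(0, y) \<le> \<mu>\<close> at points \<open>y\<close> arbitrarily close
  to \<open>y\<^sub>0\<close>. So every critical value is the supremum of the zero slice \<open>H(0, \<cdot>)\<close>.

  By stationarity, \<open>H\<^sub>L(p, y, \<omega>) = H(p, y - t, \<tau>\<^sub>t \<omega>)\<close> whenever \<open>y - t \<le> -1\<close>, so \<open>H\<^sub>L\<close> inherits these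
  properties of \<open>H\<close>, and its zero slice is a stationary process with continuous paths. The
  supremum over \<open>\<real>\<close> is shift invariant, hence a.s. equal to a constant \<open>\<mu>\<^sup>\<star>\<^sub>L\<close> by ergodicity. The
  supremum over a half line \<open>(-\<infinity>, t)\<close> has the same law as the one over \<open>(-\<infinity>, t + n)\<close>, which
  decreases to the supremum over \<open>\<real>\<close>; so it is a.s. \<open>\<mu>\<^sup>\<star>\<^sub>L\<close> too. Likewise for \<open>H\<^sub>R\<close> on right half
  lines. Finally \<open>H(0, \<cdot>)\<close> equals \<open>H\<^sub>L(0, \<cdot>)\<close> left of \<open>-1\<close>, \<open>H\<^sub>R(0, \<cdot>)\<close> right of \<open>1\<close>, and is a
  convex combination of the two in between, so its supremum is \<open>max \<mu>\<^sup>\<star>\<^sub>L \<mu>\<^sup>\<star>\<^sub>R\<close>.\<close>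

section \<open>Critical values and zero slices\<close>

lemma visc_subsol_zero_if_zero_slice_le:
  assumes "\<And>y. G 0 y \<le> mu"
  shows "visc_subsol G (\<lambda>_. 0) mu"
  unfolding visc_subsol_def
proof (intro conjI allI impI)
  fix phi phi' y
  assume "(\<forall>x. (phi has_real_derivative phi' x) (at x)) \<and> continuous_on UNIV phi' \<and>
    (\<exists>e>0. \<forall>x. \<bar>x - y\<bar> < e \<longrightarrow> (0::real) - phi x \<le> 0 - phi y)"
  then obtain e where "e > 0" "\<forall>x. \<bar>y - x\<bar> < e \<longrightarrow> phi y \<le> phi x"
    and "(phi has_real_derivative phi' y) (at y)"
    by (auto simp: abs_minus_commute)
  then have "phi' y = 0" by (intro DERIV_local_min)
  then show "G (phi' y) y \<le> mu" using assms by simp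
qed simp

lemma exists_local_max_penalized:
  fixes v :: "real \<Rightarrow> real"
  assumes v: "continuous_on UNIV v" and d: "d > 0"
  obtains K y where "\<bar>y - y0\<bar> < d"
    and "\<exists>e>0. \<forall>x. \<bar>x - y\<bar> < e \<longrightarrow> v x - K * (x - y0)\<^sup>2 \<le> v y - K * (y - y0)\<^sup>2"
proof -
  define K where "K = (\<bar>v (y0 - d)\<bar> + \<bar>v (y0 + d)\<bar> + 2 * \<bar>v y0\<bar> + 1) / d\<^sup>2"
  define u where "u x = v x - K * (x - y0)\<^sup>2" for x
  have "continuous_on {y0-d..y0+d} u"
    unfolding u_def by (intro continuous_intros continuous_on_subset[OF v]) auto
  moreover have "{y0-d..y0+d} \<noteq> {}" using d by simp
  ultimately obtain y where y: "y \<in> {y0-d..y0+d}" and max: "\<And>x. x \<in> {y0-d..y0+d} \<Longrightarrow> u x \<le> u y"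
    using continuous_attains_sup[OF compact_Icc] by metis
  \<comment> \<open>the penalty makes both endpoints worse than the centre, so the maximum is interior\<close>
  have Kd: "K * d\<^sup>2 = \<bar>v (y0 - d)\<bar> + \<bar>v (y0 + d)\<bar> + 2 * \<bar>v y0\<bar> + 1"
    using d by (simp add: K_def)
  have "u (y0 - d) < u y0" "u (y0 + d) < u y0"
    using Kd by (simp_all add: u_def power2_eq_square)
  moreover have "u y0 \<le> u y" using max d by simp
  ultimately have "\<bar>y - y0\<bar> < d" using y by (cases "y = y0 - d \<or> y = y0 + d") auto
  moreover have "\<exists>e>0. \<forall>x. \<bar>x - y\<bar> < e \<longrightarrow> u x \<le> u y"
    using \<open>\<bar>y - y0\<bar> < d\<close> by (intro exI[of _ "d - \<bar>y - y0\<bar>"]) (auto intro!: max)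
  ultimately show ?thesis using that unfolding u_def by blast
qed

lemma zero_slice_le_if_visc_subsol:
  assumes sub: "visc_subsol G v mu"
    and mono: "\<And>p y. G 0 y \<le> G p y"
    and cont: "continuous_on UNIV (\<lambda>y. G 0 y)"
  shows "G 0 y0 \<le> mu"
proof -
  have v: "continuous_on UNIV v" using sub by (simp add: visc_subsol_def)
  have "\<exists>y\<in>{y. G 0 y \<le> mu}. dist y y0 < d" if "d > 0" for d
  proof -
    obtain K y where y: "\<bar>y - y0\<bar> < d"
      and max: "\<exists>e>0. \<forall>x. \<bar>x - y\<bar> < e \<longrightarrow> v x - K * (x - y0)\<^sup>2 \<le> v y - K * (y - y0)\<^sup>2"
      using exists_local_max_penalized[OF v \<open>d > 0\<close>] .
    have "((\<lambda>x. K * (x - y0)\<^sup>2) has_real_derivative 2 * K * (x - y0)) (at x)" for x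
      by (auto intro!: derivative_eq_intros)
    moreover have "continuous_on UNIV (\<lambda>x. 2 * K * (x - y0))" by (intro continuous_intros)
    ultimately have "G (2 * K * (y - y0)) y \<le> mu"
      using sub max unfolding visc_subsol_def by (metis (no_types, lifting))
    then show ?thesis
      using order_trans[OF mono] y by (intro bexI[of _ y]) (auto simp: dist_real_def)
  qed
  then show ?thesis
    using closed_approachable[OF closed_Collect_le[OF cont continuous_on_const]] by blast
qed

lemma crit_value_eq_SUP_zero_slice:
  fixes G :: "real \<Rightarrow> real \<Rightarrow> real"
  assumes mono: "\<And>p y. G 0 y \<le> G p y"
    and cont: "continuous_on UNIV (\<lambda>y. G 0 y)"
    and bdd: "bdd_above (range (\<lambda>y. G 0 y))"
  shows "crit_value G = (SUP y. G 0 y)"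
proof -
  have "lipschitz_on 0 UNIV (\<lambda>_::real. 0::real)" by (simp add: lipschitz_on_def)
  then have "{mu. \<exists>v. (\<exists>L. lipschitz_on L UNIV v) \<and> visc_subsol G v mu} = {mu. \<forall>y. G 0 y \<le> mu}"
    using zero_slice_le_if_visc_subsol[of G _ _ _, OF _ mono cont] visc_subsol_zero_if_zero_slice_le
    by blast
  then show ?thesis unfolding crit_value_def
    by (auto intro!: cInf_eq_minimum cSUP_upper bdd cSUP_least)
qed

lemma continuous_on_if_modulus:
  fixes g :: "real \<Rightarrow> real"
  assumes w: "modulus w" and g: "\<And>x y. \<bar>g x - g y\<bar> \<le> w \<bar>x - y\<bar>"
  shows "continuous_on UNIV g"
  unfolding continuous_on_iff
proof (intro ballI allI impI)
  fix x e :: real assume "e > 0"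
  have "(w \<longlongrightarrow> 0) (at_right 0)" using w by (simp add: modulus_def)
  then have "\<forall>\<^sub>F r in at_right 0. dist (w r) 0 < e" using \<open>e > 0\<close> by (rule tendstoD)
  then obtain d where "d > 0" and d: "\<And>r. 0 < r \<Longrightarrow> r < d \<Longrightarrow> \<bar>w r\<bar> < e"
    unfolding eventually_at_right_field dist_real_def by auto
  have "dist (g x') (g x) < e" if "dist x' x < d" for x'
  proof (cases "x' = x")
    case False
    then have "\<bar>w \<bar>x' - x\<bar>\<bar> < e" using d that by (simp add: dist_real_def)
    then show ?thesis using g[of x' x] by (simp add: dist_real_def)
  qed (use \<open>e > 0\<close> in simp)
  then show "\<exists>d>0. \<forall>x'\<in>UNIV. dist x' x < d \<longrightarrow> dist (g x') (g x) < e" using \<open>d > 0\<close> by blast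
qed

section \<open>Suprema of stationary ergodic processes\<close>

lemma open_subset_closure_Int_Rats:
  fixes S :: "real set"
  assumes "open S"
  shows "S \<subseteq> closure (S \<inter> \<rat>)"
  using open_Int_closure_subset[OF assms, of \<rat>] by (simp add: Rats_closure_real)

lemma SUP_open_eq_SUP_Rats:
  fixes f :: "real \<Rightarrow> real"
  assumes f: "continuous_on UNIV f" and S: "open S" "S \<noteq> {}" and bdd: "bdd_above (f ` S)"
  shows "(SUP y\<in>S. f y) = (SUP q\<in>S \<inter> \<rat>. f q)"
proof -
  have dense: "S \<subseteq> closure (S \<inter> \<rat>)" using S(1) by (rule open_subset_closure_Int_Rats)
  then have "S \<inter> \<rat> \<noteq> {}" using S(2) by auto
  moreover have "bdd_above (f ` (S \<inter> \<rat>))" using bdd by (rule bdd_above_mono) auto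
  ultimately have "S \<inter> \<rat> \<subseteq> {y. f y \<le> (SUP q\<in>S \<inter> \<rat>. f q)}"
    by (auto intro: cSUP_upper)
  then have "S \<subseteq> {y. f y \<le> (SUP q\<in>S \<inter> \<rat>. f q)}"
    using dense closure_minimal[OF _ closed_Collect_le[OF f continuous_on_const]] by blast
  then show ?thesis
    using S(2) \<open>S \<inter> \<rat> \<noteq> {}\<close> bdd by (intro antisym cSUP_least cSUP_subset_mono) auto
qed

lemma borel_measurable_SUP_open:
  fixes X :: "real \<Rightarrow> 'a \<Rightarrow> real"
  assumes S: "open S" "S \<noteq> {}"
    and meas: "\<And>y. X y \<in> borel_measurable M"
    and cont: "\<And>\<omega>. \<omega> \<in> space M \<Longrightarrow> continuous_on UNIV (\<lambda>y. X y \<omega>)"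
    and bdd: "\<And>\<omega>. \<omega> \<in> space M \<Longrightarrow> bdd_above ((\<lambda>y. X y \<omega>) ` S)"
  shows "(\<lambda>\<omega>. SUP y\<in>S. X y \<omega>) \<in> borel_measurable M"
proof (rule measurable_cong[THEN iffD2])
  show "(SUP y\<in>S. X y \<omega>) = (SUP q\<in>S \<inter> \<rat>. X q \<omega>)" if "\<omega> \<in> space M" for \<omega>
    using SUP_open_eq_SUP_Rats[OF cont[OF that] S bdd[OF that]] .
  show "(\<lambda>\<omega>. SUP q\<in>S \<inter> \<rat>. X q \<omega>) \<in> borel_measurable M"
  proof (intro borel_measurable_cSUP meas countable_Int2 countable_rat)
    show "bdd_above ((\<lambda>q. X q \<omega>) ` (S \<inter> \<rat>))" if "\<omega> \<in> space M" for \<omega>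
      using bdd[OF that] by (rule bdd_above_mono) auto
  qed
qed

lemma (in prob_space) AE_eq_const_if_zero_one:
  fixes Y :: "'a \<Rightarrow> real"
  assumes Y: "Y \<in> borel_measurable M"
    and zero_one: "\<And>c. prob {\<omega>\<in>space M. Y \<omega> \<le> c} = 0 \<or> prob {\<omega>\<in>space M. Y \<omega> \<le> c} = 1"
  shows "\<exists>m. AE \<omega> in M. Y \<omega> = m"
proof -
  have levels: "{\<omega>\<in>space M. Y \<omega> \<le> c} \<in> sets M" for c using Y by measurable
  have "AE \<omega> in M. Y \<omega> \<le> c \<longleftrightarrow> prob {\<omega>\<in>space M. Y \<omega> \<le> c} = 1" for c
  proof (cases "prob {\<omega>\<in>space M. Y \<omega> \<le> c} = 1")
    case True
    then show ?thesis by (simp add: prob_Collect_eq_1[OF levels])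
  next
    case False
    then show ?thesis using zero_one[of c] by (simp add: prob_Collect_eq_0[OF levels])
  qed
  then have AE_rat: "AE \<omega> in M. \<forall>q\<in>\<rat>. Y \<omega> \<le> q \<longleftrightarrow> prob {\<omega>\<in>space M. Y \<omega> \<le> q} = 1"
      (is "AE \<omega> in M. ?P \<omega>")
    by (simp add: AE_ball_countable countable_rat)
  \<comment> \<open>a typical realisation lies on the same side of every rational level as any other one\<close>
  obtain \<omega>0 where \<omega>0: "?P \<omega>0"
  proof (rule ccontr)
    assume "\<not> thesis"
    from AE_rat have "AE \<omega> in M. False"
      by eventually_elim (use that \<open>\<not> thesis\<close> in blast)
    then show False by simp
  qed
  from AE_rat have "AE \<omega> in M. Y \<omega> = Y \<omega>0"
  proof eventually_elim
    case (elim \<omega>)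
    then have same: "Y \<omega> \<le> q \<longleftrightarrow> Y \<omega>0 \<le> q" if "q \<in> \<rat>" for q using that \<omega>0 by blast
    show ?case
    proof (rule ccontr)
      assume "Y \<omega> \<noteq> Y \<omega>0"
      then have "min (Y \<omega>) (Y \<omega>0) < max (Y \<omega>) (Y \<omega>0)" by linarith
      then obtain q where "q \<in> \<rat>" "min (Y \<omega>) (Y \<omega>0) < q" "q < max (Y \<omega>) (Y \<omega>0)"
        using Rats_dense_in_real by blast
      then show False using same[of q] by (auto simp: min_def max_def split: if_splits)
    qed
  qed
  then show ?thesis by blast
qed

lemma (in prob_space) prob_le_if_AE_eq_const:
  fixes Y :: "'a \<Rightarrow> real"
  assumes Y: "Y \<in> borel_measurable M" and m: "AE \<omega> in M. Y \<omega> = m"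
  shows "prob {\<omega>\<in>space M. Y \<omega> \<le> c} = (if m \<le> c then 1 else 0)"
proof -
  have "prob {\<omega>\<in>space M. Y \<omega> \<le> c} = prob {\<omega>\<in>space M. m \<le> c}"
    using m Y by (intro prob_eq_AE) (auto elim: AE_mp)
  then show ?thesis by (simp add: prob_space)
qed

lemma (in prob_space) AE_eq_const_if_same_levels:
  fixes Y Z :: "'a \<Rightarrow> real"
  assumes Y: "Y \<in> borel_measurable M" and Z: "Z \<in> borel_measurable M"
    and same: "\<And>c. prob {\<omega>\<in>space M. Y \<omega> \<le> c} = prob {\<omega>\<in>space M. Z \<omega> \<le> c}"
    and m: "AE \<omega> in M. Z \<omega> = m"
  shows "AE \<omega> in M. Y \<omega> = m"
proof -
  have levels: "prob {\<omega>\<in>space M. Y \<omega> \<le> c} = (if m \<le> c then 1 else 0)" for c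
    using same prob_le_if_AE_eq_const[OF Z m] by simp
  have "\<exists>m'. AE \<omega> in M. Y \<omega> = m'"
    by (rule AE_eq_const_if_zero_one[OF Y]) (simp add: levels)
  then obtain m' where m': "AE \<omega> in M. Y \<omega> = m'" ..
  have "(if m' \<le> c then 1 else 0) = (if m \<le> c then 1 else (0::real))" for c
    using levels prob_le_if_AE_eq_const[OF Y m'] by simp
  from this[of m] this[of m'] have "m' = m" by (auto split: if_splits)
  then show ?thesis using m' by simp
qed

lemma SUP_uminus_reindex:
  fixes f :: "real \<Rightarrow> 'a::Sup"
  shows "(SUP y\<in>S. f (- y)) = (SUP y\<in>uminus ` S. f y)"
  by (simp add: image_image)

locale stationary_process = prob_space M for M :: "'a measure" +
  fixes \<tau> :: "real \<Rightarrow> 'a \<Rightarrow> 'a" and X :: "real \<Rightarrow> 'a \<Rightarrow> real"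
  assumes shift_measurable: "\<tau> z \<in> M \<rightarrow>\<^sub>M M"
    and shift_preserving: "distr M M (\<tau> z) = M"
    and stationary: "\<omega> \<in> space M \<Longrightarrow> X (y + z) \<omega> = X y (\<tau> z \<omega>)"
    and process_measurable: "X y \<in> borel_measurable M"
    and continuous_paths: "\<omega> \<in> space M \<Longrightarrow> continuous_on UNIV (\<lambda>y. X y \<omega>)"
    and bdd_above_paths: "\<omega> \<in> space M \<Longrightarrow> bdd_above (range (\<lambda>y. X y \<omega>))"
begin

lemma shift_space: "\<omega> \<in> space M \<Longrightarrow> \<tau> z \<omega> \<in> space M"
  using measurable_space[OF shift_measurable] .

lemma bdd_above_path_image: "\<omega> \<in> space M \<Longrightarrow> bdd_above ((\<lambda>y. X y \<omega>) ` S)"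
  using bdd_above_paths by (rule bdd_above_mono) auto

lemma borel_measurable_SUP_path:
  "open S \<Longrightarrow> S \<noteq> {} \<Longrightarrow> (\<lambda>\<omega>. SUP y\<in>S. X y \<omega>) \<in> borel_measurable M"
  by (rule borel_measurable_SUP_open)
    (auto intro: process_measurable continuous_paths bdd_above_path_image)

lemma SUP_path_le_iff:
  "\<omega> \<in> space M \<Longrightarrow> S \<noteq> {} \<Longrightarrow> (SUP y\<in>S. X y \<omega>) \<le> c \<longleftrightarrow> (\<forall>y\<in>S. X y \<omega> \<le> c)"
  by (rule cSUP_le_iff[OF _ bdd_above_path_image])

lemma path_le_on_lessThan_shift:
  assumes "\<omega> \<in> space M"
  shows "(\<forall>y<t + z. X y \<omega> \<le> c) \<longleftrightarrow> (\<forall>y<t. X y (\<tau> z \<omega>) \<le> c)"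
proof
  assume "\<forall>y<t + z. X y \<omega> \<le> c"
  then show "\<forall>y<t. X y (\<tau> z \<omega>) \<le> c" by (simp add: stationary[OF assms, symmetric])
next
  assume shifted: "\<forall>y<t. X y (\<tau> z \<omega>) \<le> c"
  show "\<forall>y<t + z. X y \<omega> \<le> c"
  proof (intro allI impI)
    fix y assume "y < t + z"
    then show "X y \<omega> \<le> c" using shifted stationary[OF assms, of "y - z" z] by simp
  qed
qed

lemma prob_SUP_lessThan_le_eq:
  "prob {\<omega>\<in>space M. (SUP y\<in>{..<t}. X y \<omega>) \<le> c} = prob {\<omega>\<in>space M. (SUP y. X y \<omega>) \<le> c}"
proof -
  define A where "A n = {\<omega>\<in>space M. \<forall>y<t + real n. X y \<omega> \<le> c}" for n
  have A_SUP: "A n = {\<omega>\<in>space M. (SUP y\<in>{..<t + real n}. X y \<omega>) \<le> c}" for n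
    by (auto simp: A_def SUP_path_le_iff)
  have A_sets: "A n \<in> sets M" for n
    using borel_measurable_SUP_path[of "{..<t + real n}"] by (simp add: A_SUP borel_measurable_iff_le)
  have A_shift: "A n = \<tau> (real n) -` A 0 \<inter> space M" for n
    using path_le_on_lessThan_shift[where t = t and z = "real n" and c = c] shift_space
    by (auto simp: A_def)
  have A_const: "prob (A n) = prob {\<omega>\<in>space M. (SUP y\<in>{..<t}. X y \<omega>) \<le> c}" for n
    using measure_distr[OF shift_measurable A_sets[of 0], of "real n"]
    unfolding shift_preserving A_shift[of n, symmetric] by (simp add: A_SUP[of 0])
  have "(\<lambda>n. prob (A n)) \<longlonglongrightarrow> prob (\<Inter>n. A n)"
    using A_sets by (intro finite_Lim_measure_decseq) (auto simp: decseq_def A_def)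
  moreover have "(\<Inter>n. A n) = {\<omega>\<in>space M. (SUP y. X y \<omega>) \<le> c}"
  proof (intro set_eqI iffI)
    fix \<omega> assume "\<omega> \<in> (\<Inter>n. A n)"
    then have "\<omega> \<in> space M" "\<And>n y. y < t + real n \<Longrightarrow> X y \<omega> \<le> c" by (auto simp: A_def)
    moreover have "\<exists>n. y < t + real n" for y
      using reals_Archimedean2[of "y - t"] by (auto simp: algebra_simps)
    ultimately show "\<omega> \<in> {\<omega>\<in>space M. (SUP y. X y \<omega>) \<le> c}"
      by (metis SUP_path_le_iff UNIV_I UNIV_not_empty mem_Collect_eq)
  qed (auto simp: A_def SUP_path_le_iff)
  ultimately show ?thesis using A_const by (simp add: LIMSEQ_const_iff)
qed

lemma SUP_path_shift_invariant:
  assumes "\<omega> \<in> space M"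
  shows "(SUP y. X y (\<tau> z \<omega>)) = (SUP y. X y \<omega>)"
proof -
  have "range (\<lambda>y. X y (\<tau> z \<omega>)) = (\<lambda>y. X y \<omega>) ` range (\<lambda>y. y + z)"
    by (simp only: image_image stationary[OF assms])
  then show ?thesis by simp
qed

lemma AE_SUP_path_eq_const:
  assumes ergodic: "\<And>A. A \<in> sets M \<Longrightarrow> (\<forall>z. \<tau> z -` A \<inter> space M = A) \<Longrightarrow> prob A = 0 \<or> prob A = 1"
  shows "\<exists>m. (AE \<omega> in M. (SUP y. X y \<omega>) = m) \<and> (\<forall>t. AE \<omega> in M. (SUP y\<in>{..<t}. X y \<omega>) = m)"
proof -
  have sup_meas: "(\<lambda>\<omega>. SUP y. X y \<omega>) \<in> borel_measurable M"
    using borel_measurable_SUP_path[of UNIV] by simp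
  have "prob {\<omega>\<in>space M. (SUP y. X y \<omega>) \<le> c} = 0 \<or> prob {\<omega>\<in>space M. (SUP y. X y \<omega>) \<le> c} = 1" for c
    using sup_meas by (intro ergodic) (auto simp: SUP_path_shift_invariant shift_space)
  then obtain m where m: "AE \<omega> in M. (SUP y. X y \<omega>) = m"
    using AE_eq_const_if_zero_one[OF sup_meas] by blast
  moreover have "AE \<omega> in M. (SUP y\<in>{..<t}. X y \<omega>) = m" for t
    using borel_measurable_SUP_path[of "{..<t}"]
    by (intro AE_eq_const_if_same_levels[OF _ sup_meas prob_SUP_lessThan_le_eq m]) auto
  ultimately show ?thesis by blast
qed

lemma reflected: "stationary_process M (\<lambda>z. \<tau> (- z)) (\<lambda>y. X (- y))"
proof unfold_locales
  show "X (- (y + z)) \<omega> = X (- y) (\<tau> (- z) \<omega>)" if "\<omega> \<in> space M" for y z \<omega>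
    using stationary[OF that, of "- y" "- z"] by simp
  show "continuous_on UNIV (\<lambda>y. X (- y) \<omega>)" if "\<omega> \<in> space M" for \<omega>
    using continuous_paths[OF that]
    by (intro continuous_on_compose2[where f = uminus, OF _ continuous_on_minus[OF continuous_on_id]]) auto
  show "bdd_above (range (\<lambda>y. X (- y) \<omega>))" if "\<omega> \<in> space M" for \<omega>
    using bdd_above_paths[OF that] by (rule bdd_above_mono) auto
qed (auto intro: shift_measurable shift_preserving process_measurable)

lemma AE_SUP_path_eq_const_half_lines:
  assumes ergodic: "\<And>A. A \<in> sets M \<Longrightarrow> (\<forall>z. \<tau> z -` A \<inter> space M = A) \<Longrightarrow> prob A = 0 \<or> prob A = 1"
  shows "\<exists>m. (AE \<omega> in M. (SUP y. X y \<omega>) = m) \<and> (\<forall>t. AE \<omega> in M. (SUP y\<in>{..<t}. X y \<omega>) = m)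
    \<and> (\<forall>t. AE \<omega> in M. (SUP y\<in>{t<..}. X y \<omega>) = m)"
proof -
  interpret reflected: stationary_process M "\<lambda>z. \<tau> (- z)" "\<lambda>y. X (- y)" by (rule reflected)
  obtain m where m: "AE \<omega> in M. (SUP y. X y \<omega>) = m" "\<forall>t. AE \<omega> in M. (SUP y\<in>{..<t}. X y \<omega>) = m"
    using AE_SUP_path_eq_const[OF ergodic] by blast
  have "\<exists>m'. (AE \<omega> in M. (SUP y. X (- y) \<omega>) = m') \<and> (\<forall>t. AE \<omega> in M. (SUP y\<in>{..<t}. X (- y) \<omega>) = m')"
  proof (rule reflected.AE_SUP_path_eq_const)
    fix A assume A: "A \<in> sets M" and invariant: "\<forall>z. \<tau> (- z) -` A \<inter> space M = A"
    have "\<tau> z -` A \<inter> space M = A" for z using invariant[rule_format, of "- z"] by simp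
    then show "prob A = 0 \<or> prob A = 1" using ergodic[OF A] by blast
  qed
  then obtain m' where reflected_m':
      "AE \<omega> in M. (SUP y. X (- y) \<omega>) = m'" "\<forall>t. AE \<omega> in M. (SUP y\<in>{..<t}. X (- y) \<omega>) = m'"
    by blast
  have "(SUP y. X (- y) \<omega>) = (SUP y. X y \<omega>)" for \<omega>
    using SUP_uminus_reindex[of "\<lambda>y. X y \<omega>" UNIV] by simp
  moreover have "(SUP y\<in>{..<- t}. X (- y) \<omega>) = (SUP y\<in>{t<..}. X y \<omega>)" for t \<omega>
    using SUP_uminus_reindex[of "\<lambda>y. X y \<omega>" "{..<- t}"] by simp
  ultimately have m': "AE \<omega> in M. (SUP y. X y \<omega>) = m'" "\<forall>t. AE \<omega> in M. (SUP y\<in>{t<..}. X y \<omega>) = m'"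
    using reflected_m'(1) reflected_m'(2)[rule_format, of "- _"] by simp_all
  from m(1) m'(1) have "m' = m" by (auto dest: AE_contr elim: AE_mp)
  with m m' show ?thesis by blast
qed

end

section \<open>Hamiltonians with a left and a right stationary part\<close>

lemma SUP_blend_eq_max:
  fixes f g \<phi> :: "real \<Rightarrow> real"
  assumes \<phi>: "antimono \<phi>" "\<And>y. y < a \<Longrightarrow> \<phi> y = 1" "\<And>y. b < y \<Longrightarrow> \<phi> y = 0"
    and bdd: "bdd_above (range f)" "bdd_above (range g)"
    and f: "(SUP y\<in>{..<a}. f y) = (SUP y. f y)" and g: "(SUP y\<in>{b<..}. g y) = (SUP y. g y)"
  shows "(SUP y. \<phi> y * f y + (1 - \<phi> y) * g y) = max (SUP y. f y) (SUP y. g y)"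
    (is "(SUP y. ?h y) = _")
proof -
  have \<phi>_01: "0 \<le> \<phi> y \<and> \<phi> y \<le> 1" for y
  proof -
    have "\<phi> (max y (b + 1)) \<le> \<phi> y" "\<phi> y \<le> \<phi> (min y (a - 1))"
      using \<phi>(1) by (auto intro: antimonoD)
    moreover have "\<phi> (max y (b + 1)) = 0" "\<phi> (min y (a - 1)) = 1" using \<phi>(2,3) by auto
    ultimately show ?thesis by simp
  qed
  have "?h y \<le> max (SUP y. f y) (SUP y. g y)" for y
  proof -
    have "f y \<le> max (SUP y. f y) (SUP y. g y)" "g y \<le> max (SUP y. f y) (SUP y. g y)"
      using cSUP_upper[OF _ bdd(1), of y] cSUP_upper[OF _ bdd(2), of y] by auto
    then show ?thesis using \<phi>_01[of y] by (intro convex_bound_le) auto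
  qed
  then have bdd_h: "bdd_above (range ?h)" by (rule bdd_aboveI2)
  have "(SUP y. f y) = (SUP y\<in>{..<a}. ?h y)" unfolding f[symmetric] using \<phi>(2) by (intro SUP_cong) auto
  also have "\<dots> \<le> (SUP y. ?h y)" by (intro cSUP_subset_mono bdd_h) auto
  finally have "(SUP y. f y) \<le> (SUP y. ?h y)" .
  moreover have "(SUP y. g y) = (SUP y\<in>{b<..}. ?h y)"
    unfolding g[symmetric] using \<phi>(3) by (intro SUP_cong) auto
  moreover have "\<dots> \<le> (SUP y. ?h y)" by (intro cSUP_subset_mono bdd_h) auto
  ultimately show ?thesis
    using \<open>\<And>y. ?h y \<le> _\<close> by (intro antisym cSUP_least) auto
qed

definition zero_slice_regular :: "'a measure \<Rightarrow> (real \<Rightarrow> real) \<Rightarrow> (real \<Rightarrow> real \<Rightarrow> 'a \<Rightarrow> real) \<Rightarrow> bool"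
  where "zero_slice_regular M w G \<longleftrightarrow> (\<forall>\<omega>\<in>space M.
    (\<forall>p y. G 0 y \<omega> \<le> G p y \<omega>) \<and> (\<forall>y. G 0 y \<omega> \<le> 0) \<and> (\<forall>x y. \<bar>G 0 x \<omega> - G 0 y \<omega>\<bar> \<le> w \<bar>x - y\<bar>))"

lemma zero_slice_regular_if_bounds:
  fixes H :: "real \<Rightarrow> real \<Rightarrow> 'a \<Rightarrow> real"
  assumes mono: "\<And>p y \<omega>. \<omega> \<in> space M \<Longrightarrow> H 0 y \<omega> \<le> H p y \<omega>"
    and upper: "\<And>p y \<omega>. \<omega> \<in> space M \<Longrightarrow> H p y \<omega> \<le> C * \<bar>p + \<gamma>\<bar>"
    and modulus: "\<And>p x y \<omega>. \<omega> \<in> space M \<Longrightarrow> \<bar>H p y \<omega> - H p x \<omega>\<bar> \<le> w (\<bar>x - y\<bar> * (1 + \<bar>p\<bar>))"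
  shows "zero_slice_regular M w H"
  unfolding zero_slice_regular_def
proof (intro ballI conjI allI)
  fix \<omega> p x y assume \<omega>: "\<omega> \<in> space M"
  show "H 0 y \<omega> \<le> H p y \<omega>" using mono[OF \<omega>] .
  show "H 0 y \<omega> \<le> 0" using mono[OF \<omega>, of y "- \<gamma>"] upper[OF \<omega>, of "- \<gamma>" y] by simp
  show "\<bar>H 0 x \<omega> - H 0 y \<omega>\<bar> \<le> w \<bar>x - y\<bar>"
    using modulus[OF \<omega>, of 0 y x] by (simp add: abs_minus_commute)
qed

lemma translate_pair_into_atMost: "\<exists>t. x - t \<in> {..a} \<and> y - t \<in> {..a :: real}"
  by (intro exI[of _ "max x y - a"]) auto

lemma translate_pair_into_atLeast: "\<exists>t. x - t \<in> {a..} \<and> y - t \<in> {a :: real..}"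
  by (intro exI[of _ "min x y - a"]) auto

lemma zero_slice_regular_stationary_copy:
  fixes G H :: "real \<Rightarrow> real \<Rightarrow> 'a \<Rightarrow> real"
  assumes stat: "\<And>p y z \<omega>. \<omega> \<in> space M \<Longrightarrow> G p (y + z) \<omega> = G p y (\<tau> z \<omega>)"
    and tau: "\<And>z \<omega>. \<omega> \<in> space M \<Longrightarrow> \<tau> z \<omega> \<in> space M"
    and agree: "\<And>p y \<omega>. \<omega> \<in> space M \<Longrightarrow> y \<in> I \<Longrightarrow> G p y \<omega> = H p y \<omega>"
    and I: "\<And>x y. \<exists>t. x - t \<in> I \<and> y - t \<in> I"
    and H: "zero_slice_regular M w H"
  shows "zero_slice_regular M w G"
  unfolding zero_slice_regular_def
proof (intro ballI conjI allI)
  fix \<omega> p x y assume \<omega>: "\<omega> \<in> space M"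
  have copy: "G p y \<omega> = H p (y - t) (\<tau> t \<omega>)" if "y - t \<in> I" for p y t
    using stat[OF \<omega>, of p "y - t" t] agree[OF tau[OF \<omega>] that] by simp
  obtain t where t: "x - t \<in> I" "y - t \<in> I" using I by blast
  have "H 0 (y - t) (\<tau> t \<omega>) \<le> H p (y - t) (\<tau> t \<omega>)" "H 0 (y - t) (\<tau> t \<omega>) \<le> 0"
    "\<bar>H 0 (x - t) (\<tau> t \<omega>) - H 0 (y - t) (\<tau> t \<omega>)\<bar> \<le> w \<bar>(x - t) - (y - t)\<bar>"
    using H tau[OF \<omega>] unfolding zero_slice_regular_def by blast+
  then show "G 0 y \<omega> \<le> G p y \<omega>" "G 0 y \<omega> \<le> 0" "\<bar>G 0 x \<omega> - G 0 y \<omega>\<bar> \<le> w \<bar>x - y\<bar>"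
    by (simp_all add: copy[OF t(1)] copy[OF t(2)])
qed

lemma bdd_above_zero_slice_if_regular:
  "zero_slice_regular M w G \<Longrightarrow> \<omega> \<in> space M \<Longrightarrow> bdd_above (range (\<lambda>y. G 0 y \<omega>))"
  unfolding zero_slice_regular_def by (intro bdd_aboveI2) auto

lemma crit_value_eq_SUP_if_zero_slice_regular:
  assumes "modulus w" "zero_slice_regular M w G" "\<omega> \<in> space M"
  shows "crit_value (\<lambda>p y. G p y \<omega>) = (SUP y. G 0 y \<omega>)"
  using assms bdd_above_zero_slice_if_regular[OF assms(2,3)] unfolding zero_slice_regular_def
  by (intro crit_value_eq_SUP_zero_slice continuous_on_if_modulus[OF \<open>modulus w\<close>]) auto

lemma (in prob_space) stationary_process_zero_slice:
  fixes G :: "real \<Rightarrow> real \<Rightarrow> 'a \<Rightarrow> real"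
  assumes w: "modulus w"
    and tau: "\<And>z. \<tau> z \<in> M \<rightarrow>\<^sub>M M \<and> distr M M (\<tau> z) = M"
    and stat: "\<And>p y z \<omega>. \<omega> \<in> space M \<Longrightarrow> G p (y + z) \<omega> = G p y (\<tau> z \<omega>)"
    and meas: "(\<lambda>(p, y, \<omega>). G p y \<omega>) \<in> borel_measurable (borel \<Otimes>\<^sub>M borel \<Otimes>\<^sub>M M)"
    and G: "zero_slice_regular M w G"
  shows "stationary_process M \<tau> (\<lambda>y \<omega>. G 0 y \<omega>)"
proof unfold_locales
  show "(\<lambda>\<omega>. G 0 y \<omega>) \<in> borel_measurable M" for y
    using measurable_compose[of "\<lambda>\<omega>. (0, y, \<omega>)", OF _ meas] by simp
  show "continuous_on UNIV (\<lambda>y. G 0 y \<omega>)" if "\<omega> \<in> space M" for \<omega>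
    using G that unfolding zero_slice_regular_def by (intro continuous_on_if_modulus[OF w]) auto
qed (use tau stat bdd_above_zero_slice_if_regular[OF G] in auto)

lemma (in prob_space) AE_crit_value_eq_SUP_half_lines:
  fixes G :: "real \<Rightarrow> real \<Rightarrow> 'a \<Rightarrow> real"
  assumes w: "modulus w"
    and tau: "\<And>z. \<tau> z \<in> M \<rightarrow>\<^sub>M M \<and> distr M M (\<tau> z) = M"
    and ergodic: "\<And>A. A \<in> sets M \<Longrightarrow> (\<forall>z. \<tau> z -` A \<inter> space M = A) \<Longrightarrow> prob A = 0 \<or> prob A = 1"
    and stat: "\<And>p y z \<omega>. \<omega> \<in> space M \<Longrightarrow> G p (y + z) \<omega> = G p y (\<tau> z \<omega>)"
    and meas: "(\<lambda>(p, y, \<omega>). G p y \<omega>) \<in> borel_measurable (borel \<Otimes>\<^sub>M borel \<Otimes>\<^sub>M M)"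
    and G: "zero_slice_regular M w G"
  shows "\<exists>m. (AE \<omega> in M. crit_value (\<lambda>p y. G p y \<omega>) = m) \<and> (AE \<omega> in M. (SUP y. G 0 y \<omega>) = m)
    \<and> (\<forall>t. AE \<omega> in M. (SUP y\<in>{..<t}. G 0 y \<omega>) = m) \<and> (\<forall>t. AE \<omega> in M. (SUP y\<in>{t<..}. G 0 y \<omega>) = m)"
proof -
  interpret stationary_process M \<tau> "\<lambda>y \<omega>. G 0 y \<omega>"
    by (rule stationary_process_zero_slice[OF w tau stat meas G])
  obtain m where m: "AE \<omega> in M. (SUP y. G 0 y \<omega>) = m" "\<forall>t. AE \<omega> in M. (SUP y\<in>{..<t}. G 0 y \<omega>) = m"
    "\<forall>t. AE \<omega> in M. (SUP y\<in>{t<..}. G 0 y \<omega>) = m"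
    using AE_SUP_path_eq_const_half_lines[OF ergodic] by blast
  moreover have "AE \<omega> in M. crit_value (\<lambda>p y. G p y \<omega>) = m"
    using m(1) AE_space by eventually_elim (simp add: crit_value_eq_SUP_if_zero_slice_regular[OF w G])
  ultimately show ?thesis by blast
qed

theorem theorem4p11:
  fixes M :: "'w measure"
    and H HL HR :: "real \<Rightarrow> real \<Rightarrow> 'w \<Rightarrow> real"
    and \<tau> :: "real \<Rightarrow> 'w \<Rightarrow> 'w"
    and c0 C0 \<gamma> :: real and w \<phi> :: "real \<Rightarrow> real"
  assumes P: "prob_space M"
    and meas: "(\<lambda>(p, y, \<omega>). H p y \<omega>) \<in> borel_measurable (borel \<Otimes>\<^sub>M borel \<Otimes>\<^sub>M M)"
    and measL: "(\<lambda>(p, y, \<omega>). HL p y \<omega>) \<in> borel_measurable (borel \<Otimes>\<^sub>M borel \<Otimes>\<^sub>M M)"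
    and measR: "(\<lambda>(p, y, \<omega>). HR p y \<omega>) \<in> borel_measurable (borel \<Otimes>\<^sub>M borel \<Otimes>\<^sub>M M)"
    and tau_meas: "\<And>z. \<tau> z \<in> M \<rightarrow>\<^sub>M M \<and> distr M M (\<tau> z) = M"
    and tau_group: "\<And>x z \<omega>. \<omega> \<in> space M \<Longrightarrow> \<tau> (x + z) \<omega> = \<tau> x (\<tau> z \<omega>)"
    and tau_zero: "\<And>\<omega>. \<omega> \<in> space M \<Longrightarrow> \<tau> 0 \<omega> = \<omega>"
    and ergodic: "\<And>A. A \<in> sets M \<Longrightarrow> (\<forall>z. \<tau> z -` A \<inter> space M = A) \<Longrightarrow>
                    measure M A = 0 \<or> measure M A = 1"
    and H1: "\<exists>L. \<forall>p q y \<omega>. \<omega> \<in> space M \<longrightarrow> \<bar>H p y \<omega> - H q y \<omega>\<bar> \<le> L * \<bar>p - q\<bar>"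
    and H2: "c0 > 0" "C0 > 0" "\<gamma> > 0"
      "\<And>p y \<omega>. \<omega> \<in> space M \<Longrightarrow> - c0 * \<bar>p + \<gamma>\<bar> \<le> H p y \<omega> \<and> H p y \<omega> \<le> C0 * \<bar>p + \<gamma>\<bar>"
    and H3: "\<forall>K. \<exists>R. \<forall>p y \<omega>. \<omega> \<in> space M \<and> \<bar>p\<bar> \<ge> R \<longrightarrow> H p y \<omega> \<ge> K"
    and H4: "modulus w"
      "\<And>p x y \<omega>. \<omega> \<in> space M \<Longrightarrow> \<bar>H p y \<omega> - H p x \<omega>\<bar> \<le> w (\<bar>x - y\<bar> * (1 + \<bar>p\<bar>))"
    and H5: "\<And>y \<omega>. \<omega> \<in> space M \<Longrightarrow> convex_on UNIV (\<lambda>p. H p y \<omega>)"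
    and H6: "\<And>p y \<omega>. \<omega> \<in> space M \<Longrightarrow> H p y \<omega> \<ge> H 0 y \<omega>"
    and H7: "smooth_fun \<phi>" "antimono \<phi>" "\<And>y. y \<le> -1 \<Longrightarrow> \<phi> y = 1" "\<And>y. y \<ge> 1 \<Longrightarrow> \<phi> y = 0"
      "\<And>p y \<omega>. \<omega> \<in> space M \<Longrightarrow> H p y \<omega> = \<phi> y * HL p y \<omega> + (1 - \<phi> y) * HR p y \<omega>"
    and H8: "\<And>p y z \<omega>. \<omega> \<in> space M \<Longrightarrow> HL p (y + z) \<omega> = HL p y (\<tau> z \<omega>)"
      "\<And>p y z \<omega>. \<omega> \<in> space M \<Longrightarrow> HR p (y + z) \<omega> = HR p y (\<tau> z \<omega>)"
    and H9: "\<And>U V. U \<in> sets borel \<Longrightarrow> V \<in> sets borel \<Longrightarrow> (\<forall>u\<in>U. \<forall>v\<in>V. \<bar>u - v\<bar> \<ge> 1) \<Longrightarrow>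
               prob_space.indep_set M (gen_sigma M H U) (gen_sigma M H V)"
  shows "\<exists>\<mu>L \<mu>R.
           (AE \<omega> in M. crit_value (\<lambda>p y. HL p y \<omega>) = \<mu>L) \<and>
           (AE \<omega> in M. crit_value (\<lambda>p y. HR p y \<omega>) = \<mu>R) \<and>
           (\<exists>\<Omega>1 \<in> sets M. measure M \<Omega>1 = 1 \<and>
              (\<forall>\<omega> \<in> \<Omega>1. crit_value (\<lambda>p y. H p y \<omega>) = max \<mu>L \<mu>R))"
proof -
  interpret prob_space M by (rule P)
  have tau_space: "\<And>z \<omega>. \<omega> \<in> space M \<Longrightarrow> \<tau> z \<omega> \<in> space M"
    using tau_meas measurable_space by metis
  have H: "zero_slice_regular M w H"
    using H6 H2(4)[THEN conjunct2] H4(2) by (rule zero_slice_regular_if_bounds)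
  have HL: "zero_slice_regular M w HL"
    using H7(3,5) by (intro zero_slice_regular_stationary_copy[OF H8(1) tau_space _
        translate_pair_into_atMost[where a = "-1"] H]) auto
  then obtain \<mu>L where \<mu>L: "AE \<omega> in M. crit_value (\<lambda>p y. HL p y \<omega>) = \<mu>L"
    "AE \<omega> in M. (SUP y. HL 0 y \<omega>) = \<mu>L" "AE \<omega> in M. (SUP y\<in>{..<-1}. HL 0 y \<omega>) = \<mu>L"
    using AE_crit_value_eq_SUP_half_lines[OF H4(1) tau_meas ergodic H8(1) measL] by blast
  have HR: "zero_slice_regular M w HR"
    using H7(4,5) by (intro zero_slice_regular_stationary_copy[OF H8(2) tau_space _
        translate_pair_into_atLeast[where a = 1] H]) auto
  then obtain \<mu>R where \<mu>R: "AE \<omega> in M. crit_value (\<lambda>p y. HR p y \<omega>) = \<mu>R"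
    "AE \<omega> in M. (SUP y. HR 0 y \<omega>) = \<mu>R" "AE \<omega> in M. (SUP y\<in>{1<..}. HR 0 y \<omega>) = \<mu>R"
    using AE_crit_value_eq_SUP_half_lines[OF H4(1) tau_meas ergodic H8(2) measR] by blast
  have "AE \<omega> in M. crit_value (\<lambda>p y. H p y \<omega>) = max \<mu>L \<mu>R"
    using \<mu>L(2,3) \<mu>R(2,3) AE_space
  proof eventually_elim
    case (elim \<omega>)
    then have "(SUP y. \<phi> y * HL 0 y \<omega> + (1 - \<phi> y) * HR 0 y \<omega>) = max \<mu>L \<mu>R"
      using H7(2-4) bdd_above_zero_slice_if_regular[OF HL] bdd_above_zero_slice_if_regular[OF HR]
      by (subst SUP_blend_eq_max[where a = "-1" and b = 1]) auto
    then show ?case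
      using crit_value_eq_SUP_if_zero_slice_regular[OF H4(1) H \<open>\<omega> \<in> space M\<close>] H7(5) elim by simp
  qed
  then obtain \<Omega>1 where "\<Omega>1 \<subseteq> {\<omega>\<in>space M. crit_value (\<lambda>p y. H p y \<omega>) = max \<mu>L \<mu>R}"
    and "\<Omega>1 \<in> sets M" "measure M \<Omega>1 = 1"
    by (rule AE_E_prob)
  with \<mu>L(1) \<mu>R(1) show ?thesis by blast
qed

end
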